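(* Let $0<q<1$ and let $a,b,u,v,z_1,z_2\in\mathbb C$ with $|uz_1|<1$, $|vz_2|<1$, and $az_1q^k\neq1$, $bz_2q^k\ne1$ for all $k\in\mathbb N_0$. Then $$\sum_{m,n=0}^\infty H_{m,n}(z_1,z_2|q)\,\frac{\prod_{i=0}^{m-1}(u-aq^i)\,\prod_{i=0}^{n-1}(v-bq^i)}{(q;q)_m(q;q)_n} =\frac{(az_1,bz_2;q)_\infty}{(uz_1,vz_2;q)_\infty}\sum_{k=0}^\infty\frac{\prod_{i=0}^{k-1}(u-aq^i)(v-bq^i)}{(q,az_1,bz_2;q)_k}(-1)^kq^{\binom k2}.$$ (In basic hypergeometric notation, the left side is $\sum H_{m,n}\frac{u^m(a/u;q)_m v^n(b/v;q)_n}{(q;q)_m(q;q)_n}$ and the right side is $\frac{(az_1,bz_2;q)_\infty}{(uz_1,vz_2;q)_\infty}\,{}_2\phi_2(a/u,b/v;az_1,bz_2;q,uv)$.)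
   Context: $(a;q)_n=\prod_{j=0}^{n-1}(1-aq^j)$, $(a;q)_\infty=\prod_{j\ge0}(1-aq^j)$, $(a_1,\dots,a_r;q)_n=\prod_i(a_i;q)_n$, $\left[{m\atop k}\right]_q=\frac{(q;q)_m}{(q;q)_k(q;q)_{m-k}}$, $m\wedge n=\min\{m,n\}$. The first $q$-$2D$-Hermite polynomials are $$H_{m,n}(z_1,z_2|q)=\sum_{k=0}^{m\wedge n}\left[{m\atop k}\right]_q\left[{n\atop k}\right]_q(-1)^kq^{\binom k2}(q;q)_k\,z_1^{m-k}z_2^{n-k}.$$ *)

theory Defs
  imports "HOL-Analysis.Analysis"
begin

definition qpoch :: "complex \<Rightarrow> complex \<Rightarrow> nat \<Rightarrow> complex" where
  "qpoch a q n = (\<Prod>j<n. 1 - a * q ^ j)"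

definition qpoch_inf :: "complex \<Rightarrow> complex \<Rightarrow> complex" where
  "qpoch_inf a q = (\<Prod>j. 1 - a * q ^ j)"

definition qbinom :: "complex \<Rightarrow> nat \<Rightarrow> nat \<Rightarrow> complex" where
  "qbinom q m k = qpoch q q m / (qpoch q q k * qpoch q q (m - k))"

definition H2D :: "nat \<Rightarrow> nat \<Rightarrow> complex \<Rightarrow> complex \<Rightarrow> complex \<Rightarrow> complex" where
  "H2D m n z1 z2 q = (\<Sum>k\<le>min m n. qbinom q m k * qbinom q n k * (-1) ^ k
      * q ^ (k choose 2) * qpoch q q k * z1 ^ (m - k) * z2 ^ (n - k))"

end

theory Submission
  imports Defs
begin

text \<open>
  Both sides are sums of one absolutely convergent series over triples \<open>(k, r, s)\<close>. Expand
  \<open>H(m, n)\<close> as a sum over \<open>k \<le> min m n\<close> and write \<open>m = k + r\<close>, \<open>n = k + s\<close>. Splitting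
  \<open>(\<Prod>i<k+r. u - a q^i) = (\<Prod>i<k. u - a q^i) (\<Prod>i<r. u - (a q^k) q^i)\<close> turns the
  \<open>(m, n)\<close>-term of the left-hand side into \<open>\<Sum>k. d(k) \<alpha>(k, r) z1^r \<beta>(k, s) z2^s\<close>, where
  \<open>\<alpha>(k, -)\<close> and \<open>\<beta>(k, -)\<close> are the coefficients of Cauchy's q-binomial series
  \<open>\<Sum>r. (\<Prod>i<r. u - c q^i) / (q;q)_r z^r = (c z;q)_\<infinity> / (u z;q)_\<infinity>\<close> for \<open>c = a q^k\<close>, \<open>c = b q^k\<close>.
  Summing over \<open>r\<close> and \<open>s\<close> first turns the \<open>k\<close>-th slice into
  \<open>d(k) (a q^k z1;q)_\<infinity> (b q^k z2;q)_\<infinity> / ((u z1;q)_\<infinity> (v z2;q)_\<infinity>)\<close>, which is the \<open>k\<close>-th term of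
  the right-hand side because \<open>(c;q)_\<infinity> = (c q^k;q)_\<infinity> (c;q)_k\<close>. The rearrangement is justified by
  dominating all three factors by series \<open>\<Sum>n. (\<Prod>i<n. U + C r^i) / (\<Prod>j<n. 1 - r^(j+1))\<close> with
  \<open>U < 1\<close>, which converge by the ratio test. The q-binomial theorem follows from the functional
  equation \<open>g(z) (1 - u z) = g(q z) (1 - c z)\<close> of its left-hand side \<open>g\<close>, iterated \<open>n\<close> times,
  together with \<open>g(q^n z) \<longrightarrow> g(0) = 1\<close>.
\<close>

lemma qpoch_0 [simp]: "qpoch a q 0 = 1"
  by (simp add: qpoch_def)

lemma qpoch_Suc [simp]: "qpoch a q (Suc n) = qpoch a q n * (1 - a * q ^ n)"
  by (simp add: qpoch_def)

lemma prod_one_minus_power_pos: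
  fixes r :: real
  assumes "0 \<le> r" "r < 1"
  shows "0 < (\<Prod>j<n. 1 - r ^ Suc j)"
  using assms by (intro prod_pos) (simp add: power_less_one_iff del: power_Suc)

lemma norm_qpoch_qq_ge:
  fixes q :: complex
  assumes "norm q < 1"
  shows "(\<Prod>j<n. 1 - norm q ^ Suc j) \<le> norm (qpoch q q n)"
proof -
  have "(\<Prod>j<n. 1 - norm q ^ Suc j) \<le> (\<Prod>j<n. norm (1 - q ^ Suc j))"
  proof (rule prod_mono)
    fix j
    have "norm q ^ Suc j < 1" using assms by (simp add: power_less_one_iff del: power_Suc)
    moreover have "1 - norm q ^ Suc j \<le> norm (1 - q ^ Suc j)"
      using norm_triangle_ineq2[of 1 "q ^ Suc j"] by (simp add: norm_mult norm_power)
    ultimately show "0 \<le> 1 - norm q ^ Suc j \<and> 1 - norm q ^ Suc j \<le> norm (1 - q ^ Suc j)" by simp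
  qed
  also have "\<dots> = norm (qpoch q q n)" by (simp add: qpoch_def prod_norm)
  finally show ?thesis .
qed

lemma qpoch_qq_nonzero:
  fixes q :: complex
  assumes "norm q < 1"
  shows "qpoch q q n \<noteq> 0"
  using prod_one_minus_power_pos[of "norm q" n] norm_qpoch_qq_ge[OF assms, of n] assms by auto

lemma convergent_prod_qpoch:
  fixes q c :: complex
  assumes "norm q < 1"
  shows "convergent_prod (\<lambda>j. 1 - c * q ^ j)"
proof (intro abs_convergent_prod_imp_convergent_prod summable_imp_abs_convergent_prod)
  show "summable (\<lambda>j. norm (1 - c * q ^ j - 1))"
    using assms by (simp add: norm_mult norm_power summable_mult summable_geometric)
qed

lemma qpoch_tendsto_qpoch_inf:
  fixes q c :: complex
  assumes "norm q < 1"
  shows "(\<lambda>n. qpoch c q n) \<longlonglongrightarrow> qpoch_inf c q"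
proof -
  have "(\<lambda>n. qpoch c q (Suc n)) \<longlonglongrightarrow> qpoch_inf c q"
    using convergent_prod_LIMSEQ[OF convergent_prod_qpoch[OF assms, of c]]
    by (simp add: qpoch_def qpoch_inf_def lessThan_Suc_atMost)
  then show ?thesis by (rule LIMSEQ_imp_Suc)
qed

lemma qpoch_inf_nonzero:
  fixes q c :: complex
  assumes "norm q < 1" "\<And>k. c * q ^ k \<noteq> 1"
  shows "qpoch_inf c q \<noteq> 0"
  unfolding qpoch_inf_def using assms by (intro prodinf_nonzero convergent_prod_qpoch) auto

lemma qpoch_inf_shift:
  fixes q c :: complex
  assumes "norm q < 1"
  shows "qpoch_inf c q = qpoch_inf (c * q ^ k) q * qpoch c q k"
proof -
  have "qpoch c q (n + k) = qpoch (c * q ^ k) q n * qpoch c q k" for n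
    by (induction n) (simp_all add: power_add algebra_simps)
  then have "(\<lambda>n. qpoch c q (n + k)) \<longlonglongrightarrow> qpoch_inf (c * q ^ k) q * qpoch c q k"
    by (simp add: tendsto_mult qpoch_tendsto_qpoch_inf[OF assms])
  moreover have "(\<lambda>n. qpoch c q (n + k)) \<longlonglongrightarrow> qpoch_inf c q"
    by (rule LIMSEQ_ignore_initial_segment[OF qpoch_tendsto_qpoch_inf[OF assms]])
  ultimately show ?thesis using LIMSEQ_unique by blast
qed

lemma norm_mult_power_le:
  fixes q :: "'a::real_normed_div_algebra"
  assumes "norm q < 1"
  shows "norm (x * q ^ n) \<le> norm x"
  using assms by (simp add: norm_mult norm_power mult_left_le power_le_one)

lemma norm_diff_mult_power_le:
  fixes q :: "'a::real_normed_div_algebra"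
  assumes "norm q < 1"
  shows "norm (x - y * q ^ i) \<le> norm x + norm y"
  using norm_triangle_ineq4[of x "y * q ^ i"] norm_mult_power_le[OF assms, of y i] by linarith

lemma summable_ratio_tendsto:
  fixes f \<rho> :: "nat \<Rightarrow> real"
  assumes "\<And>n. 0 \<le> f n" "\<And>n. f (Suc n) = \<rho> n * f n" "\<rho> \<longlonglongrightarrow> L" "L < 1"
  shows "summable f"
proof -
  obtain N where N: "\<And>n. n \<ge> N \<Longrightarrow> \<rho> n < (L + 1) / 2"
    using order_tendstoD(2)[OF assms(3), of "(L + 1) / 2"] assms(4)
    by (auto simp: eventually_sequentially)
  show ?thesis
  proof (rule summable_ratio_test[of "(L + 1) / 2" N])
    fix n assume "N \<le> n"
    then have "\<rho> n * f n \<le> (L + 1) / 2 * f n"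
      using N[of n] assms(1)[of n] by (intro mult_right_mono) auto
    then show "norm (f (Suc n)) \<le> (L + 1) / 2 * norm (f n)"
      using assms(1)[of n] assms(1)[of "Suc n"] assms(2)[of n] by simp
  qed (use assms(4) in simp)
qed

definition qbinomial_majorant :: "real \<Rightarrow> real \<Rightarrow> real \<Rightarrow> nat \<Rightarrow> real" where
  "qbinomial_majorant r U C n = (\<Prod>i<n. U + C * r ^ i) / (\<Prod>j<n. 1 - r ^ Suc j)"

lemma qbinomial_majorant_nonneg:
  assumes "0 \<le> r" "r < 1" "0 \<le> U" "0 \<le> C"
  shows "0 \<le> qbinomial_majorant r U C n"
  unfolding qbinomial_majorant_def using assms prod_one_minus_power_pos[OF assms(1,2)]
  by (intro divide_nonneg_pos prod_nonneg) auto

lemma qbinomial_majorant_summable_on: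
  assumes "0 \<le> r" "r < 1" "0 \<le> U" "U < 1" "0 \<le> C"
  shows "qbinomial_majorant r U C summable_on UNIV"
proof -
  have "summable (qbinomial_majorant r U C)"
  proof (rule summable_ratio_tendsto)
    show "qbinomial_majorant r U C (Suc n) = (U + C * r ^ n) / (1 - r ^ Suc n) * qbinomial_majorant r U C n" for n
      by (simp add: qbinomial_majorant_def mult_ac)
    have "(\<lambda>n. (U + C * r ^ n) / (1 - r * r ^ n)) \<longlonglongrightarrow> (U + C * 0) / (1 - r * 0)"
      using assms by (intro tendsto_intros LIMSEQ_power_zero) auto
    then show "(\<lambda>n. (U + C * r ^ n) / (1 - r ^ Suc n)) \<longlonglongrightarrow> U"
      by simp
  qed (use assms qbinomial_majorant_nonneg in auto)
  then show ?thesis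
    using qbinomial_majorant_nonneg[OF assms(1-3,5)] by (rule summable_nonneg_imp_summable_on)
qed

lemma norm_prod_div_qpoch_le_majorant:
  fixes q :: complex and x :: "nat \<Rightarrow> complex"
  assumes "norm q < 1" "\<And>i. i < n \<Longrightarrow> norm (x i) \<le> U + C * norm q ^ i"
  shows "norm ((\<Prod>i<n. x i) / qpoch q q n) \<le> qbinomial_majorant (norm q) U C n"
proof -
  have "norm (\<Prod>i<n. x i) \<le> (\<Prod>i<n. U + C * norm q ^ i)"
    unfolding prod_norm[symmetric] using assms(2) by (intro prod_mono) (auto intro: order_trans[OF norm_ge_zero])
  moreover have "(\<Prod>j<n. 1 - norm q ^ Suc j) \<le> norm (qpoch q q n)"
    by (rule norm_qpoch_qq_ge[OF assms(1)])
  moreover have "0 < (\<Prod>j<n. 1 - norm q ^ Suc j)"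
    using assms(1) by (intro prod_one_minus_power_pos) auto
  ultimately show ?thesis
    unfolding qbinomial_majorant_def norm_divide
    by (intro frac_le) (auto intro: order_trans[OF norm_ge_zero])
qed

definition qbinomial_coeff :: "complex \<Rightarrow> complex \<Rightarrow> complex \<Rightarrow> nat \<Rightarrow> complex" where
  "qbinomial_coeff u c q n = (\<Prod>i<n. u - c * q ^ i) / qpoch q q n"

definition qbinomial_series :: "complex \<Rightarrow> complex \<Rightarrow> complex \<Rightarrow> complex \<Rightarrow> complex" where
  "qbinomial_series u c q z = (\<Sum>n. qbinomial_coeff u c q n * z ^ n)"

lemma norm_qbinomial_term_le:
  assumes "norm q < 1" "norm c \<le> C"
  shows "norm (qbinomial_coeff u c q n * z ^ n)
           \<le> qbinomial_majorant (norm q) (norm u * norm z) (C * norm z) n"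
proof -
  have "qbinomial_coeff u c q n * z ^ n = (\<Prod>i<n. (u - c * q ^ i) * z) / qpoch q q n"
    by (simp add: qbinomial_coeff_def prod.distrib)
  also have "norm \<dots> \<le> qbinomial_majorant (norm q) (norm u * norm z) (C * norm z) n"
  proof (rule norm_prod_div_qpoch_le_majorant[OF assms(1)])
    fix i
    have "norm (u - c * q ^ i) \<le> norm u + C * norm q ^ i"
      using norm_triangle_ineq4[of u "c * q ^ i"] assms(2)
        mult_right_mono[OF assms(2), of "norm q ^ i"]
      by (simp add: norm_mult norm_power)
    then have "norm ((u - c * q ^ i) * z) \<le> (norm u + C * norm q ^ i) * norm z"
      by (simp add: norm_mult mult_right_mono)
    then show "norm ((u - c * q ^ i) * z) \<le> norm u * norm z + C * norm z * norm q ^ i"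
      by (simp add: algebra_simps)
  qed
  finally show ?thesis .
qed

lemma qbinomial_terms_abs_summable:
  assumes "norm q < 1" "norm (u * z) < 1"
  shows "(\<lambda>n. norm (qbinomial_coeff u c q n * z ^ n)) summable_on UNIV"
proof (rule Infinite_Sum.abs_summable_on_comparison_test')
  show "qbinomial_majorant (norm q) (norm u * norm z) (norm c * norm z) summable_on UNIV"
    using assms by (intro qbinomial_majorant_summable_on) (auto simp: norm_mult)
  show "norm (qbinomial_coeff u c q n * z ^ n)
          \<le> qbinomial_majorant (norm q) (norm u * norm z) (norm c * norm z) n" for n
    by (rule norm_qbinomial_term_le[OF assms(1) order_refl])
qed

lemma summable_norm_qbinomial_series:
  assumes "norm q < 1" "norm (u * z) < 1"
  shows "summable (\<lambda>n. norm (qbinomial_coeff u c q n * z ^ n))"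
  using qbinomial_terms_abs_summable[OF assms] by (rule summable_on_imp_summable)

lemma qbinomial_coeff_Suc:
  assumes "norm q < 1"
  shows "qbinomial_coeff u c q (Suc n) * (1 - q ^ Suc n) = qbinomial_coeff u c q n * (u - c * q ^ n)"
proof -
  have "qpoch q q (Suc n) \<noteq> 0" "qpoch q q n \<noteq> 0"
    using qpoch_qq_nonzero[OF assms] by blast+
  then show ?thesis by (simp add: qbinomial_coeff_def field_simps)
qed

lemma qbinomial_series_functional_eq:
  assumes "norm q < 1" "norm (u * z) < 1"
  shows "qbinomial_series u c q z * (1 - u * z) = qbinomial_series u c q (q * z) * (1 - c * z)"
proof -
  let ?a = "qbinomial_coeff u c q"
  have qz: "norm (u * (q * z)) < 1"
    using assms mult_left_le_one_le[of "norm (u * z)" "norm q"]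
    by (simp add: norm_mult mult.left_commute)
  have S: "(\<lambda>n. ?a n * z ^ n) sums qbinomial_series u c q z"
    and Sq: "(\<lambda>n. ?a n * (q * z) ^ n) sums qbinomial_series u c q (q * z)"
    unfolding qbinomial_series_def
    using summable_norm_qbinomial_series[OF assms(1)] assms(2) qz
    by (simp_all add: summable_sums summable_norm_cancel)
  define h where "h n = ?a n * (1 - q ^ n) * z ^ n" for n
  have "(\<lambda>n. ?a n * z ^ n - ?a n * (q * z) ^ n) sums
          (qbinomial_series u c q z - qbinomial_series u c q (q * z))"
    by (intro sums_diff S Sq)
  moreover have "(\<lambda>n. ?a n * z ^ n - ?a n * (q * z) ^ n) = h"
    by (rule ext) (simp add: h_def power_mult_distrib algebra_simps)
  ultimately have h1: "h sums (qbinomial_series u c q z - qbinomial_series u c q (q * z))"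
    by simp
  have "(\<lambda>n. z * (u * (?a n * z ^ n) - c * (?a n * (q * z) ^ n))) sums
          (z * (u * qbinomial_series u c q z - c * qbinomial_series u c q (q * z)))"
    by (intro sums_mult sums_diff S Sq)
  moreover have "z * (u * (?a n * z ^ n) - c * (?a n * (q * z) ^ n)) = h (Suc n)" for n
    unfolding h_def qbinomial_coeff_Suc[OF assms(1)]
    by (simp add: power_mult_distrib algebra_simps)
  ultimately have "(\<lambda>n. h (Suc n)) sums (z * (u * qbinomial_series u c q z - c * qbinomial_series u c q (q * z)))"
    by simp
  then have "h sums (z * (u * qbinomial_series u c q z - c * qbinomial_series u c q (q * z)) + h 0)"
    by (rule sums_Suc)
  moreover have "h 0 = 0"
    by (simp add: h_def)
  ultimately have "h sums (z * (u * qbinomial_series u c q z - c * qbinomial_series u c q (q * z)))"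
    by simp
  from sums_unique2[OF h1 this] show ?thesis
    by (simp add: algebra_simps)
qed

lemma qbinomial_series_iterate:
  assumes "norm q < 1" "norm (u * z) < 1"
  shows "qbinomial_series u c q z * qpoch (u * z) q n
           = qbinomial_series u c q (q ^ n * z) * qpoch (c * z) q n"
proof (induction n)
  case (Suc n)
  have "norm (u * (q ^ n * z)) < 1"
    using norm_mult_power_le[OF assms(1), of "u * z" n] assms(2) by (simp add: mult_ac)
  note FE = qbinomial_series_functional_eq[OF assms(1) this, of c]
  have "qbinomial_series u c q z * qpoch (u * z) q (Suc n)
          = qbinomial_series u c q z * qpoch (u * z) q n * (1 - u * (q ^ n * z))"
    by (simp add: mult_ac)
  also have "\<dots> = qpoch (c * z) q n * (qbinomial_series u c q (q ^ n * z) * (1 - u * (q ^ n * z)))"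
    using Suc.IH by simp
  also have "\<dots> = qpoch (c * z) q n * (qbinomial_series u c q (q * (q ^ n * z)) * (1 - c * (q ^ n * z)))"
    using FE by simp
  also have "\<dots> = qbinomial_series u c q (q ^ Suc n * z) * qpoch (c * z) q (Suc n)"
    by (simp add: mult_ac)
  finally show ?case .
qed simp

lemma qbinomial_series_tendsto_1:
  assumes "norm q < 1"
  shows "(\<lambda>n. qbinomial_series u c q (q ^ n * z)) \<longlonglongrightarrow> 1"
proof -
  define w where "w = complex_of_real (1 / (norm u + 1))"
  have pos: "0 < norm u + 1"
    using norm_ge_zero[of u] by linarith
  then have nw: "norm w = 1 / (norm u + 1)"
    unfolding w_def norm_of_real by simp
  then have "w \<noteq> 0"
    using pos by auto
  have "norm (u * w) = norm u / (norm u + 1)"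
    using nw by (simp add: norm_mult)
  also have "\<dots> < 1"
    using pos by simp
  finally have "norm (u * w) < 1" .
  with \<open>w \<noteq> 0\<close> have "isCont (qbinomial_series u c q) 0"
    unfolding qbinomial_series_def[abs_def]
    by (intro isCont_powser[of _ w] summable_norm_cancel[OF summable_norm_qbinomial_series] assms) simp_all
  moreover have "(\<lambda>n. q ^ n * z) \<longlonglongrightarrow> 0"
    by (rule tendsto_mult_left_zero[OF LIMSEQ_power_zero[OF assms]])
  ultimately have "(\<lambda>n. qbinomial_series u c q (q ^ n * z)) \<longlonglongrightarrow> qbinomial_series u c q 0"
    by (rule isCont_tendsto_compose)
  moreover have "qbinomial_series u c q 0 = 1"
    unfolding qbinomial_series_def by (subst powser_zero) (simp add: qbinomial_coeff_def)
  ultimately show ?thesis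
    by simp
qed

theorem qbinomial_theorem:
  assumes "norm q < 1" "norm (u * z) < 1"
  shows "((\<lambda>n. qbinomial_coeff u c q n * z ^ n)
           has_sum qpoch_inf (c * z) q / qpoch_inf (u * z) q) UNIV"
proof -
  have "(\<lambda>n. qbinomial_series u c q z * qpoch (u * z) q n)
          \<longlonglongrightarrow> qbinomial_series u c q z * qpoch_inf (u * z) q"
    by (intro tendsto_intros qpoch_tendsto_qpoch_inf assms)
  moreover have "(\<lambda>n. qbinomial_series u c q z * qpoch (u * z) q n) \<longlonglongrightarrow> qpoch_inf (c * z) q"
    unfolding qbinomial_series_iterate[OF assms]
    using tendsto_mult[OF qbinomial_series_tendsto_1 qpoch_tendsto_qpoch_inf, OF assms(1) assms(1)]
    by simp
  ultimately have "qbinomial_series u c q z * qpoch_inf (u * z) q = qpoch_inf (c * z) q"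
    by (rule LIMSEQ_unique)
  moreover have "qpoch_inf (u * z) q \<noteq> 0"
  proof (rule qpoch_inf_nonzero[OF assms(1)])
    fix k
    have "norm (u * z * q ^ k) < 1"
      using norm_mult_power_le[OF assms(1)] assms(2) by (rule le_less_trans)
    then show "u * z * q ^ k \<noteq> 1" by auto
  qed
  ultimately have "qbinomial_series u c q z = qpoch_inf (c * z) q / qpoch_inf (u * z) q"
    by (simp add: eq_divide_eq)
  moreover have "(\<lambda>n. qbinomial_coeff u c q n * z ^ n) sums qbinomial_series u c q z"
    unfolding qbinomial_series_def
    by (intro summable_sums summable_norm_cancel[OF summable_norm_qbinomial_series] assms)
  ultimately have "(\<lambda>n. qbinomial_coeff u c q n * z ^ n) sums (qpoch_inf (c * z) q / qpoch_inf (u * z) q)"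
    by simp
  then show ?thesis
    by (intro norm_summable_imp_has_sum summable_norm_qbinomial_series assms)
qed

lemma abs_summable_on_product:
  fixes f :: "'a \<Rightarrow> 'c::real_normed_div_algebra" and g :: "'b \<Rightarrow> 'c"
  assumes "(\<lambda>x. norm (f x)) summable_on A" "(\<lambda>y. norm (g y)) summable_on B"
  shows "(\<lambda>p. norm ((\<lambda>(x, y). f x * g y) p)) summable_on A \<times> B"
proof -
  let ?G = "infsum (\<lambda>y. norm (g y)) B"
  have "((\<lambda>y. norm (f x) * norm (g y)) has_sum norm (f x) * ?G) B" for x
    by (intro has_sum_cmult_right has_sum_infsum assms(2))
  then have "(\<lambda>(x, y). norm (f x) * norm (g y)) summable_on A \<times> B"
    by (intro summable_on_SigmaI[where g = "\<lambda>x. norm (f x) * ?G"] summable_on_cmult_left assms(1)) auto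
  then show ?thesis
    by (simp add: case_prod_unfold norm_mult)
qed

lemma has_sum_product:
  fixes f :: "'a \<Rightarrow> 'c::{real_normed_div_algebra, banach}" and g :: "'b \<Rightarrow> 'c"
  assumes "(f has_sum F) A" "(g has_sum G) B"
    and "(\<lambda>x. norm (f x)) summable_on A" "(\<lambda>y. norm (g y)) summable_on B"
  shows "((\<lambda>(x, y). f x * g y) has_sum F * G) (A \<times> B)"
proof (rule has_sum_SigmaI[where g = "\<lambda>x. f x * G"])
  show "((\<lambda>y. (\<lambda>(x, y). f x * g y) (x, y)) has_sum f x * G) B" for x
    using has_sum_cmult_right[OF assms(2)] by simp
  show "((\<lambda>x. f x * G) has_sum F * G) A"
    by (rule has_sum_cmult_left[OF assms(1)])
  show "(\<lambda>(x, y). f x * g y) summable_on A \<times> B"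
    by (rule abs_summable_summable[OF abs_summable_on_product[OF assms(3,4)]])
qed

lemma has_sum_regroup_diagonal:
  fixes t :: "nat \<times> nat \<times> nat \<Rightarrow> 'a::{comm_monoid_add, uniform_space, uniform_topological_group_add}"
  assumes "(t has_sum S) UNIV"
  shows "((\<lambda>(m, n). \<Sum>k\<le>min m n. t (k, m - k, n - k)) has_sum S) UNIV"
proof (rule has_sum_Sigma')
  have "(t has_sum S) UNIV \<longleftrightarrow>
        ((\<lambda>((m, n), k). t (k, m - k, n - k)) has_sum S) (SIGMA (m, n):UNIV. {..min m n})"
    by (rule has_sum_reindex_bij_witness[where j = "\<lambda>(k, r, s). ((k + r, k + s), k)"
          and i = "\<lambda>((m, n), k). (k, m - k, n - k)"]) auto
  with assms show "((\<lambda>((m, n), k). t (k, m - k, n - k)) has_sum S) (SIGMA (m, n):UNIV. {..min m n})"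
    by simp
qed auto

lemma has_sum_cmult_right_imp_suminf:
  fixes f :: "nat \<Rightarrow> 'a::real_normed_field"
  assumes "((\<lambda>k. c * f k) has_sum S) UNIV"
  shows "S = c * (\<Sum>k. f k)"
proof (cases "c = 0")
  case True
  then show ?thesis
    using assms has_sum_unique[OF assms, of 0] by simp
next
  case False
  then have "f sums (S / c)"
    using assms by (simp add: has_sum_cmult_right_iff has_sum_imp_sums)
  with False show ?thesis
    by (simp add: sums_unique[symmetric])
qed

lemma prod_lessThan_add_shift:
  fixes q :: "'a::comm_monoid_mult"
  shows "(\<Prod>i<k + r. f (q ^ i)) = (\<Prod>i<k. f (q ^ i)) * (\<Prod>i<r. f (q ^ k * q ^ i))"
  by (induction r) (simp_all add: power_add mult_ac)

lemma prod_minus_power_mult: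
  fixes q :: "'a::comm_ring_1"
  shows "(\<Prod>i<k. - (q ^ i * f i)) = (-1) ^ k * q ^ (k choose 2) * (\<Prod>i<k. f i)"
proof (induction k)
  case (Suc k)
  have "Suc k choose 2 = (k choose 2) + k"
    by (simp add: numeral_2_eq_2)
  with Suc.IH show ?case
    by (simp add: power_add mult_ac)
qed (simp add: numeral_2_eq_2)

locale qhermite_expansion =
  fixes q a b u v z1 z2 :: complex
  assumes norm_q: "norm q < 1"
    and norm_uz1: "norm (u * z1) < 1"
    and norm_vz2: "norm (v * z2) < 1"
begin

text \<open>\<open>diagonal_coeff k = (-1)^k q^(k choose 2) (\<Prod>i<k. (u - a q^i) (v - b q^i)) / (q;q)_k\<close>, written
  as a single product so that it is dominated by \<open>qbinomial_majorant\<close> with \<open>U = 0\<close>.\<close>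

definition diagonal_coeff :: "nat \<Rightarrow> complex" where
  "diagonal_coeff k = (\<Prod>i<k. - (q ^ i * ((u - a * q ^ i) * (v - b * q ^ i)))) / qpoch q q k"

definition triple_term :: "nat \<times> nat \<times> nat \<Rightarrow> complex" where
  "triple_term = (\<lambda>(k, r, s). diagonal_coeff k
      * ((qbinomial_coeff u (a * q ^ k) q r * z1 ^ r) * (qbinomial_coeff v (b * q ^ k) q s * z2 ^ s)))"

lemma H2D_term_eq_diagonal_sum:
  "H2D m n z1 z2 q * (\<Prod>i<m. u - a * q ^ i) * (\<Prod>i<n. v - b * q ^ i) / (qpoch q q m * qpoch q q n)
     = (\<Sum>k\<le>min m n. triple_term (k, m - k, n - k))"
  unfolding H2D_def sum_distrib_right sum_divide_distrib
proof (rule sum.cong[OF refl])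
  fix k assume "k \<in> {..min m n}"
  then obtain r s where m: "m = k + r" and n: "n = k + s"
    by (metis atMost_iff le_Suc_ex min.bounded_iff)
  have "qpoch q q j \<noteq> 0" for j
    by (rule qpoch_qq_nonzero[OF norm_q])
  then show "qbinom q m k * qbinom q n k * (-1) ^ k * q ^ (k choose 2) * qpoch q q k
        * z1 ^ (m - k) * z2 ^ (n - k) * (\<Prod>i<m. u - a * q ^ i) * (\<Prod>i<n. v - b * q ^ i)
        / (qpoch q q m * qpoch q q n) = triple_term (k, m - k, n - k)"
    unfolding m n triple_term_def diagonal_coeff_def qbinomial_coeff_def qbinom_def
      prod_lessThan_add_shift[where f = "\<lambda>x. u - a * x"] prod_lessThan_add_shift[where f = "\<lambda>x. v - b * x"]
      prod_minus_power_mult prod.distrib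
    by (simp add: field_simps)
qed

lemma norm_diagonal_coeff_le:
  "norm (diagonal_coeff k) \<le> qbinomial_majorant (norm q) 0 ((norm u + norm a) * (norm v + norm b)) k"
  unfolding diagonal_coeff_def
proof (rule norm_prod_div_qpoch_le_majorant[OF norm_q])
  fix i
  have "norm ((u - a * q ^ i) * (v - b * q ^ i)) \<le> (norm u + norm a) * (norm v + norm b)"
    unfolding norm_mult by (intro mult_mono norm_diff_mult_power_le norm_q) auto
  then show "norm (- (q ^ i * ((u - a * q ^ i) * (v - b * q ^ i))))
               \<le> 0 + (norm u + norm a) * (norm v + norm b) * norm q ^ i"
    by (simp add: norm_mult norm_power mult_left_mono mult.commute)
qed

lemma triple_term_abs_summable: "(\<lambda>p. norm (triple_term p)) summable_on UNIV"
proof -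
  define M0 where "M0 = qbinomial_majorant (norm q) 0 ((norm u + norm a) * (norm v + norm b))"
  define M1 where "M1 = qbinomial_majorant (norm q) (norm u * norm z1) (norm a * norm z1)"
  define M2 where "M2 = qbinomial_majorant (norm q) (norm v * norm z2) (norm b * norm z2)"
  have nonneg: "0 \<le> M0 k" "0 \<le> M1 k" "0 \<le> M2 k" for k
    unfolding M0_def M1_def M2_def using norm_q by (auto intro: qbinomial_majorant_nonneg)
  have "M0 summable_on UNIV" "M1 summable_on UNIV" "M2 summable_on UNIV"
    unfolding M0_def M1_def M2_def using norm_q norm_uz1 norm_vz2
    by (auto intro!: qbinomial_majorant_summable_on simp: norm_mult)
  then have "(\<lambda>k. norm (M0 k)) summable_on UNIV" "(\<lambda>r. norm (M1 r)) summable_on UNIV"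
    "(\<lambda>s. norm (M2 s)) summable_on UNIV"
    using nonneg by simp_all
  then have "(\<lambda>p. norm ((\<lambda>(k, p). M0 k * (\<lambda>(r, s). M1 r * M2 s) p) p)) summable_on UNIV \<times> (UNIV \<times> UNIV)"
    by (intro abs_summable_on_product) simp_all
  then have "(\<lambda>p. norm ((\<lambda>(k, p). M0 k * (\<lambda>(r, s). M1 r * M2 s) p) p)) summable_on UNIV"
    by (simp only: UNIV_Times_UNIV)
  then show ?thesis
  proof (rule Infinite_Sum.abs_summable_on_comparison_test)
    fix p :: "nat \<times> nat \<times> nat"
    obtain k r s where p: "p = (k, r, s)"
      by (cases p) auto
    have "norm (triple_term (k, r, s)) = norm (diagonal_coeff k)
           * (norm (qbinomial_coeff u (a * q ^ k) q r * z1 ^ r) * norm (qbinomial_coeff v (b * q ^ k) q s * z2 ^ s))"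
      by (simp add: triple_term_def norm_mult)
    also have "\<dots> \<le> M0 k * (M1 r * M2 s)"
      unfolding M0_def M1_def M2_def using norm_q nonneg[unfolded M0_def M1_def M2_def]
      by (intro mult_mono norm_diagonal_coeff_le norm_qbinomial_term_le norm_diff_mult_power_le[where x = 0, simplified]
          mult_nonneg_nonneg norm_ge_zero) auto
    also have "\<dots> = norm (M0 k * (M1 r * M2 s))"
      using nonneg by simp
    finally show "norm (triple_term p) \<le> norm ((\<lambda>(k, p). M0 k * (\<lambda>(r, s). M1 r * M2 s) p) p)"
      by (simp add: p)
  qed
qed

lemma has_sum_triple_term_fixed_k:
  "((\<lambda>p. triple_term (k, p)) has_sum diagonal_coeff k
      * (qpoch_inf (a * q ^ k * z1) q / qpoch_inf (u * z1) q
         * (qpoch_inf (b * q ^ k * z2) q / qpoch_inf (v * z2) q))) UNIV"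
proof -
  have "((\<lambda>(r, s). (qbinomial_coeff u (a * q ^ k) q r * z1 ^ r) * (qbinomial_coeff v (b * q ^ k) q s * z2 ^ s))
          has_sum (qpoch_inf (a * q ^ k * z1) q / qpoch_inf (u * z1) q
                   * (qpoch_inf (b * q ^ k * z2) q / qpoch_inf (v * z2) q))) (UNIV \<times> UNIV)"
    using norm_q norm_uz1 norm_vz2
    by (intro has_sum_product qbinomial_theorem qbinomial_terms_abs_summable)
  from has_sum_cmult_right[OF this, of "diagonal_coeff k"] show ?thesis
    by (simp add: triple_term_def case_prod_unfold)
qed

lemma diagonal_coeff_mult_qpoch_inf:
  assumes "\<And>k. a * z1 * q ^ k \<noteq> 1" "\<And>k. b * z2 * q ^ k \<noteq> 1"
  shows "diagonal_coeff k * (qpoch_inf (a * q ^ k * z1) q / qpoch_inf (u * z1) q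
           * (qpoch_inf (b * q ^ k * z2) q / qpoch_inf (v * z2) q))
         = qpoch_inf (a * z1) q * qpoch_inf (b * z2) q / (qpoch_inf (u * z1) q * qpoch_inf (v * z2) q)
           * ((\<Prod>i<k. (u - a * q ^ i) * (v - b * q ^ i))
              / (qpoch q q k * qpoch (a * z1) q k * qpoch (b * z2) q k) * (-1) ^ k * q ^ (k choose 2))"
proof -
  have nonzero: "qpoch (a * z1) q k \<noteq> 0" "qpoch (b * z2) q k \<noteq> 0"
    using assms by (auto simp: qpoch_def)
  have shift: "qpoch_inf (a * z1) q = qpoch_inf (a * q ^ k * z1) q * qpoch (a * z1) q k"
    "qpoch_inf (b * z2) q = qpoch_inf (b * q ^ k * z2) q * qpoch (b * z2) q k"
    using qpoch_inf_shift[OF norm_q, of "a * z1" k] qpoch_inf_shift[OF norm_q, of "b * z2" k]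
    by (simp_all add: mult_ac)
  have cancel: "s1 * s2 * P / Qk * (A / Du * (B / Dv))
      = A * Pa * (B * Pb) / (Du * Dv) * (P / (Qk * Pa * Pb) * s1 * s2)"
    if "Pa \<noteq> 0" "Pb \<noteq> 0" for A B P Du Dv Qk Pa Pb s1 s2 :: complex
    using that by (simp add: divide_simps)
  show ?thesis
    unfolding diagonal_coeff_def prod_minus_power_mult shift by (rule cancel[OF nonzero])
qed

theorem has_sum_H2D_expansion:
  assumes "\<And>k. a * z1 * q ^ k \<noteq> 1" "\<And>k. b * z2 * q ^ k \<noteq> 1"
  shows "((\<lambda>(m, n). H2D m n z1 z2 q * (\<Prod>i<m. u - a * q ^ i) * (\<Prod>i<n. v - b * q ^ i)
            / (qpoch q q m * qpoch q q n))
         has_sum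
           (qpoch_inf (a * z1) q * qpoch_inf (b * z2) q / (qpoch_inf (u * z1) q * qpoch_inf (v * z2) q)
            * (\<Sum>k. (\<Prod>i<k. (u - a * q ^ i) * (v - b * q ^ i))
                 / (qpoch q q k * qpoch (a * z1) q k * qpoch (b * z2) q k) * (-1) ^ k * q ^ (k choose 2))))
         UNIV"
proof -
  obtain S where S: "(triple_term has_sum S) UNIV"
    using abs_summable_summable[OF triple_term_abs_summable] by (auto simp: summable_on_def)
  have "((\<lambda>k. diagonal_coeff k * (qpoch_inf (a * q ^ k * z1) q / qpoch_inf (u * z1) q
           * (qpoch_inf (b * q ^ k * z2) q / qpoch_inf (v * z2) q))) has_sum S) UNIV"
  proof (rule has_sum_Sigma'[where B = "\<lambda>_. UNIV"])
    show "(triple_term has_sum S) (UNIV \<times> UNIV)"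
      using S by simp
  qed (rule has_sum_triple_term_fixed_k)
  then have "((\<lambda>k. qpoch_inf (a * z1) q * qpoch_inf (b * z2) q / (qpoch_inf (u * z1) q * qpoch_inf (v * z2) q)
      * ((\<Prod>i<k. (u - a * q ^ i) * (v - b * q ^ i))
         / (qpoch q q k * qpoch (a * z1) q k * qpoch (b * z2) q k) * (-1) ^ k * q ^ (k choose 2))) has_sum S) UNIV"
    by (simp only: diagonal_coeff_mult_qpoch_inf[OF assms])
  from has_sum_cmult_right_imp_suminf[OF this] has_sum_regroup_diagonal[OF S] show ?thesis
    by (simp add: H2D_term_eq_diagonal_sum)
qed

end

theorem theorem3p4:
  fixes q :: real and a b u v z1 z2 :: complex
  assumes "0 < q" "q < 1"
    and "norm (u * z1) < 1" "norm (v * z2) < 1"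
    and "\<And>k::nat. a * z1 * of_real q ^ k \<noteq> 1"
    and "\<And>k::nat. b * z2 * of_real q ^ k \<noteq> 1"
  shows "((\<lambda>(m, n). H2D m n z1 z2 (of_real q)
            * (\<Prod>i<m. u - a * of_real q ^ i) * (\<Prod>i<n. v - b * of_real q ^ i)
            / (qpoch (of_real q) (of_real q) m * qpoch (of_real q) (of_real q) n))
         has_sum
           (qpoch_inf (a * z1) (of_real q) * qpoch_inf (b * z2) (of_real q)
            / (qpoch_inf (u * z1) (of_real q) * qpoch_inf (v * z2) (of_real q))
            * (\<Sum>k. (\<Prod>i<k. (u - a * of_real q ^ i) * (v - b * of_real q ^ i))
                 / (qpoch (of_real q) (of_real q) k * qpoch (a * z1) (of_real q) k
                    * qpoch (b * z2) (of_real q) k)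
                 * (-1) ^ k * of_real q ^ (k choose 2))))
         (UNIV :: (nat \<times> nat) set)"
proof -
  interpret qhermite_expansion "of_real q" a b u v z1 z2
    using assms(1-4) by unfold_locales auto
  show ?thesis
    using has_sum_H2D_expansion assms(5,6) by blast
qed

end
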